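(* Let $R$ be a commutative ring, let $n=2^m$ with $m\ge 0$, and let $A=\sum_{i=0}^{n-1}a_ix^i$ and $B=\sum_{i=0}^{n-1}b_ix^i$ be polynomials in $R[x]$. Consider the recursion tree for the product $AB$ built with the interleaved splitting scheme (described in the context). Let $K$ be a direct leaf node, reached from the root by the path with labels $d_1d_2\dots d_m$, where every $d_i\in\{0,1\}$ ($d_1$ is the label of the edge leaving the root). Then the contribution of $K$ is $$\frac{1-x^{2^m}}{1-x}\,a_r b_r\,x^r,\qquad\text{where } r=\sum_{i=1}^m d_i 2^{i-1},$$ i.e. $r$ is the integer whose binary expansion is $d_m d_{m-1}\dots d_2d_1$. Here $\frac{1-x^{2^m}}{1-x}$ denotes the polynomial $1+x+\dots+x^{2^m-1}$.
   Context: Recursion tree. Each node carries a triple $(P,Q,X)$, where $X=x^{2^{i}}$ at depth $i$ and $P,Q$ are polynomials in $X$; the root is $(A,B,x)$. For a node $(P,Q,X)$ at depth $i<m$, write $P=P_1X+P_0$ and $Q=Q_1X+Q_0$, where $P_0,P_1,Q_0,Q_1$ are polynomials in $X^2$ (interleaved splitting: $P_0$ collects the monomials of $P$ whose exponent in $X$ is even, $P_1X$ those whose exponent is odd). Using the identity $PQ=(X+1)P_0Q_0+X(X+1)P_1Q_1-X(P_1-P_0)(Q_1-Q_0)$, the node has three children: the edge labelled 0 leads to $(P_0,Q_0,X^2)$ with edge weight $X+1$; the edge labelled 1 leads to $(P_1,Q_1,X^2)$ with edge weight $X(X+1)$; the edge labelled 2 leads to $(P_1-P_0,Q_1-Q_0,X^2)$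 with edge weight $-X$. Nodes at depth $m$ are leaves; their $P,Q$ are constants. The contribution of a leaf is the product of the edge weights along the path from the root to it, multiplied by the product $PQ$ of the two constants it carries. $AB$ is the sum of the contributions of all leaves. A node is direct if the path from the root to it contains no edge labelled 2. *)

theory Defs
  imports "HOL-Computational_Algebra.Polynomial"
begin

text \<open>A node polynomial P is stored as a polynomial in its own variable X
  (X = x^(2^i) at depth i). Interleaved splitting P = P1 X + P0 with P0, P1
  polynomials in X^2; these are stored as polynomials in the variable X^2.\<close>

definition even_part :: "'a::comm_ring_1 poly \<Rightarrow> 'a poly" where
  "even_part P = (\<Sum>k\<le>degree P. monom (coeff P (2*k)) k)"

definition odd_part :: "'a::comm_ring_1 poly \<Rightarrow> 'a poly" where
  "odd_part P = (\<Sum>k\<le>degree P. monom (coeff P (2*k+1)) k)"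

definition child :: "nat \<Rightarrow> 'a::comm_ring_1 poly \<times> 'a poly \<Rightarrow> 'a poly \<times> 'a poly" where
  "child d PQ = (let (P, Q) = PQ in
     if d = 0 then (even_part P, even_part Q)
     else if d = 1 then (odd_part P, odd_part Q)
     else (odd_part P - even_part P, odd_part Q - even_part Q))"

definition edge_weight :: "nat \<Rightarrow> nat \<Rightarrow> 'a::comm_ring_1 poly" where
  "edge_weight i d = (let X = monom 1 (2^i) :: 'a poly in
     if d = 0 then X + 1 else if d = 1 then X * (X + 1) else - X)"

fun path_node :: "('a::comm_ring_1 poly \<times> 'a poly) \<Rightarrow> nat list \<Rightarrow> 'a poly \<times> 'a poly" where
  "path_node PQ [] = PQ"
| "path_node PQ (d # ds) = path_node (child d PQ) ds"

fun path_weight :: "nat \<Rightarrow> nat list \<Rightarrow> 'a::comm_ring_1 poly" where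
  "path_weight i [] = 1"
| "path_weight i (d # ds) = edge_weight i d * path_weight (Suc i) ds"

text \<open>Contribution of the leaf reached from root (A,B,x) along labels ds (ds!0 = d_1).\<close>
definition contribution :: "'a::comm_ring_1 poly \<Rightarrow> 'a poly \<Rightarrow> nat list \<Rightarrow> 'a poly" where
  "contribution A B ds = path_weight 0 ds * (case path_node (A, B) ds of (P, Q) \<Rightarrow> P * Q)"

end

theory Submission
  imports Defs
begin

(* Along a direct path every step replaces (P, Q) by its even or its odd part, which halves the
   degree bound; after m steps only the coefficients of index r survive, as constants.
   The edge weights on such a path are x^(2^i d) (1 + x^(2^i)), and the product of the factors
   1 + x^(2^i), i < m, is the geometric sum 1 + x + ... + x^(2^m - 1). *)

fun binary_value :: "nat list \<Rightarrow> nat" where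
  "binary_value [] = 0"
| "binary_value (d # ds) = d + 2 * binary_value ds"

lemma binary_value_eq_sum: "binary_value ds = (\<Sum>i<length ds. ds ! i * 2^i)"
proof (induction ds)
  case Nil
  then show ?case by simp
next
  case (Cons d ds)
  have "(\<Sum>i<length (d # ds). (d # ds) ! i * 2^i) = d + (\<Sum>i<length ds. ds ! i * 2^Suc i)"
    by (simp add: sum.lessThan_Suc_shift del: sum.lessThan_Suc)
  also have "\<dots> = d + 2 * (\<Sum>i<length ds. ds ! i * 2^i)"
    by (simp add: sum_distrib_left mult_ac)
  finally show ?case
    using Cons by simp
qed

lemma coeff_even_part: "coeff (even_part P) k = coeff P (2 * k)"
proof -
  have "coeff (even_part P) k = (if k \<le> degree P then coeff P (2 * k) else 0)"
    unfolding even_part_def coeff_sum by (simp add: coeff_monom sum.delta)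
  then show ?thesis
    by (auto intro: coeff_eq_0)
qed

lemma coeff_odd_part: "coeff (odd_part P) k = coeff P (2 * k + 1)"
proof -
  have "coeff (odd_part P) k = (if k \<le> degree P then coeff P (2 * k + 1) else 0)"
    unfolding odd_part_def coeff_sum by (simp add: coeff_monom sum.delta)
  then show ?thesis
    by (auto intro: coeff_eq_0)
qed

lemma degree_less_of_coeff_interleaved:
  assumes "degree P < 2 * n" and "\<And>k. coeff R k = coeff P (2 * k + d)"
  shows "degree R < n"
proof (rule degree_lessI)
  show "R \<noteq> 0 \<or> n > 0"
    using assms(1) by simp
  show "\<forall>k\<ge>n. coeff R k = 0"
    using assms by (auto intro: coeff_eq_0)
qed

lemma path_node_direct:
  assumes "length ds = m" and "set ds \<subseteq> {0, 1}"
    and "degree P < 2^m" and "degree Q < 2^m"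
  shows "path_node (P, Q) ds = ([:coeff P (binary_value ds):], [:coeff Q (binary_value ds):])"
  using assms
proof (induction ds arbitrary: P Q m)
  case Nil
  then show ?case
    using degree_0_id[of P] degree_0_id[of Q] by simp
next
  case (Cons d ds)
  then obtain m' where m: "m = Suc m'" "length ds = m'"
    by auto
  define part :: "'a poly \<Rightarrow> 'a poly" where "part = (if d = 0 then even_part else odd_part)"
  have d: "d = 0 \<or> d = 1"
    using Cons.prems(2) by auto
  have coeff_part: "coeff (part R) k = coeff R (2 * k + d)" for R k
    using d by (auto simp: part_def coeff_even_part coeff_odd_part)
  have "child d (P, Q) = (part P, part Q)"
    using d by (auto simp: child_def part_def)
  moreover have "degree (part P) < 2^m'" "degree (part Q) < 2^m'"
    using Cons.prems(3,4) m(1)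
    by (auto intro: degree_less_of_coeff_interleaved coeff_part)
  ultimately show ?case
    using Cons.IH[OF m(2)] Cons.prems(2) coeff_part by (simp add: add.commute)
qed

lemma edge_weight_direct:
  assumes "d \<in> {0, 1}"
  shows "edge_weight i d = monom 1 (2^i * d) * (monom 1 (2^i) + 1)"
  using assms by (auto simp: edge_weight_def Let_def monom_0 one_pCons distrib_left)

lemma path_weight_direct:
  assumes "set ds \<subseteq> {0, 1}"
  shows "path_weight i ds =
    monom 1 (2^i * binary_value ds) * (\<Prod>j<length ds. monom 1 (2^(i + j)) + 1)"
  using assms
proof (induction ds arbitrary: i)
  case Nil
  then show ?case by (simp add: monom_0 one_pCons)
next
  case (Cons d ds)
  have monoms: "monom 1 (2^i * d) * monom 1 (2^Suc i * binary_value ds) =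
      (monom 1 (2^i * binary_value (d # ds)) :: 'a poly)"
    by (simp add: mult_monom algebra_simps)
  have prods: "(\<Prod>j<length (d # ds). monom 1 (2^(i + j)) + 1 :: 'a poly) =
      (monom 1 (2^i) + 1) * (\<Prod>j<length ds. monom 1 (2^(Suc i + j)) + 1)"
    by (simp add: prod.lessThan_Suc_shift del: prod.lessThan_Suc)
  have "path_weight i (d # ds) = monom 1 (2^i * d) * (monom 1 (2^i) + 1) *
      (monom 1 (2^Suc i * binary_value ds) * (\<Prod>j<length ds. monom 1 (2^(Suc i + j)) + 1) :: 'a poly)"
    using Cons.prems Cons.IH[of "Suc i"] by (simp add: edge_weight_direct)
  then show ?case
    unfolding prods monoms[symmetric] by (simp add: mult_ac)
qed

lemma sum_monom_lessThan_pow2: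
  "(\<Sum>j<2^m. monom 1 j) = (\<Prod>j<m. monom 1 (2^j) + 1 :: 'a::comm_ring_1 poly)"
proof (induction m)
  case 0
  then show ?case by (simp add: monom_0 one_pCons)
next
  case (Suc m)
  have "(\<Sum>j<2^Suc m. monom 1 j :: 'a poly) =
      (\<Sum>j\<in>{0..<2^m}. monom 1 j) + (\<Sum>j\<in>{2^m..<2^m + 2^m}. monom 1 j)"
    by (simp add: mult_2 lessThan_atLeast0 sum.atLeastLessThan_concat)
  also have "(\<Sum>j\<in>{2^m..<2^m + 2^m}. monom 1 j :: 'a poly) = monom 1 (2^m) * (\<Sum>j<2^m. monom 1 j)"
    using sum.shift_bounds_nat_ivl[of "monom 1" 0 "2^m" "2^m"]
    by (simp add: lessThan_atLeast0 sum_distrib_left mult_monom add.commute)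
  finally have "(\<Sum>j<2^Suc m. monom 1 j :: 'a poly) = (monom 1 (2^m) + 1) * (\<Sum>j<2^m. monom 1 j)"
    by (simp add: lessThan_atLeast0 algebra_simps)
  then show ?case
    using Suc by (simp add: mult_ac)
qed

theorem lemma1:
  fixes A B :: "'a::comm_ring_1 poly" and m :: nat and ds :: "nat list"
  assumes "degree A < 2^m" and "degree B < 2^m"
    and "length ds = m" and "set ds \<subseteq> {0, 1}"
  shows "contribution A B ds =
    (\<Sum>j<2^m. monom 1 j) *
    monom (coeff A (\<Sum>i<m. ds ! i * 2^i) * coeff B (\<Sum>i<m. ds ! i * 2^i)) (\<Sum>i<m. ds ! i * 2^i)"
proof -
  define r where "r = binary_value ds"
  have r_eq: "(\<Sum>i<m. ds ! i * 2^i) = r"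
    using assms(3) by (simp add: r_def binary_value_eq_sum)
  have "contribution A B ds =
      (\<Prod>j<m. monom 1 (2^j) + 1) * (monom 1 r * ([:coeff A r:] * [:coeff B r:]))"
    using path_node_direct[OF assms(3,4,1,2)] path_weight_direct[OF assms(4), of 0, where 'a = 'a] assms(3)
    unfolding contribution_def by (simp add: r_def mult_ac)
  also have "\<dots> = (\<Prod>j<m. monom 1 (2^j) + 1) * monom (coeff A r * coeff B r) r"
    by (simp add: monom_0[symmetric] mult_monom)
  finally show ?thesis
    by (simp add: r_eq sum_monom_lessThan_pow2)
qed

end
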